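(* Let $X$ be a complex manifold, $\omega$ a Hermitian metric and $\gamma$ a smooth real $(1,1)$-form on $X$. For any bidegree $(p,q)$ and any $C^\infty$ family $(\alpha_t)_{t\in(-\varepsilon,\varepsilon)}$ of smooth $(p,q)$-forms, with $\varepsilon>0$ so small that $\omega+t\gamma>0$ for all $t\in(-\varepsilon,\varepsilon)$, $$\frac{d}{dt}\Big|_{t=0}\big(\Lambda_{\omega+t\gamma}\alpha_t\big)=\Lambda_\omega\Big(\frac{d\alpha_t}{dt}\Big|_{t=0}\Big)-(\gamma\wedge\cdot)^\star_\omega\,\alpha_0.$$
   Context: Hermitian metrics are smooth positive definite real $(1,1)$-forms. For a Hermitian metric $\rho$, $\Lambda_\rho$ is the adjoint of $\rho\wedge\cdot$ with respect to the pointwise inner product induced by $\rho$; $(\gamma\wedge\cdot)^\star_\omega$ is the adjoint of multiplication by $\gamma$ with respect to the pointwise inner product induced by $\omega$. *)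

theory Defs
  imports "HOL-Analysis.Analysis"
begin

text \<open>Pointwise model of complex-valued differential forms at a point of an
n-dimensional complex manifold, in holomorphic coordinates z_1..z_n
(indexed by the finite linearly ordered type 'n).  The complexified
cotangent space has basis dz_j (Inl j) and d(conj z_j) (Inr j).
A form is given by its coefficients on the basis e_A = wedge of the
elements of A in increasing order (order idx_less below).\<close>

type_synonym 'n form = "('n + 'n) set \<Rightarrow> complex"

definition idx_less :: "('n::linorder + 'n) \<Rightarrow> ('n + 'n) \<Rightarrow> bool" where
  "idx_less x y = (case (x, y) of
      (Inl a, Inl b) \<Rightarrow> a < b
    | (Inl a, Inr b) \<Rightarrow> True
    | (Inr a, Inl b) \<Rightarrow> False
    | (Inr a, Inr b) \<Rightarrow> a < b)"

definition bsign :: "(('n::linorder + 'n) \<Rightarrow> ('n + 'n)) \<Rightarrow> ('n + 'n) set \<Rightarrow> complex" where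
  "bsign f A = (-1) ^ card {(a, a'). a \<in> A \<and> a' \<in> A \<and> idx_less a a' \<and> idx_less (f a') (f a)}"

text \<open>Sign of sorting the concatenation (A in order, then B in order).\<close>
definition shuffle_sign :: "('n::linorder + 'n) set \<Rightarrow> ('n + 'n) set \<Rightarrow> complex" where
  "shuffle_sign A B = (-1) ^ card {(a, b). a \<in> A \<and> b \<in> B \<and> idx_less b a}"

definition wedge :: "('n::{finite,linorder}) form \<Rightarrow> 'n form \<Rightarrow> 'n form" where
  "wedge \<alpha> \<beta> C = (\<Sum>A\<in>Pow C. shuffle_sign A (C - A) * \<alpha> A * \<beta> (C - A))"

definition bideg :: "nat \<Rightarrow> nat \<Rightarrow> ('n::{finite,linorder}) form \<Rightarrow> bool" where
  "bideg p q \<alpha> \<longleftrightarrow> (\<forall>A. \<alpha> A \<noteq> 0 \<longrightarrow>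
      card {j. Inl j \<in> A} = p \<and> card {j. Inr j \<in> A} = q)"

definition swap_idx :: "('n + 'n) \<Rightarrow> ('n + 'n)" where
  "swap_idx x = (case x of Inl a \<Rightarrow> Inr a | Inr a \<Rightarrow> Inl a)"

text \<open>Complex conjugation of forms: conj(dz_j) = d(conj z_j).\<close>
definition conj_form :: "('n::{finite,linorder}) form \<Rightarrow> 'n form" where
  "conj_form \<alpha> B = cnj (\<alpha> (swap_idx ` B)) * bsign swap_idx (swap_idx ` B)"

definition real_11_form :: "('n::{finite,linorder}) form \<Rightarrow> bool" where
  "real_11_form \<gamma> \<longleftrightarrow> bideg 1 1 \<gamma> \<and> conj_form \<gamma> = \<gamma>"

text \<open>Coefficient matrix h of a (1,1)-form written i * sum h_jk dz_j wedge d(conj z_k).\<close>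
definition coef_mat :: "('n::{finite,linorder}) form \<Rightarrow> complex ^ ('n::{finite,linorder}) ^ ('n::{finite,linorder})" where
  "coef_mat \<omega> = (\<chi> j k. - \<i> * \<omega> {Inl j, Inr k})"

definition hermitian_metric :: "('n::{finite,linorder}) form \<Rightarrow> bool" where
  "hermitian_metric \<omega> \<longleftrightarrow> real_11_form \<omega> \<and>
     (\<forall>v::complex ^ ('n::{finite,linorder}). v \<noteq> 0 \<longrightarrow>
        0 < Re (\<Sum>j\<in>UNIV. \<Sum>k\<in>UNIV. coef_mat \<omega> $ j $ k * v $ j * cnj (v $ k)))"

text \<open>Pointwise Hermitian inner product (linear in the first slot) induced by
\<omega> on 1-forms: <dz_j,dz_k> = (h^{-1})_{kj}, <dzbar_j,dzbar_k> = (h^{-1})_{jk},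
<dz_j,dzbar_k> = 0; extended to all degrees by the determinant formula.\<close>
definition dual_gram :: "('n::{finite,linorder}) form \<Rightarrow> ('n + 'n) \<Rightarrow> ('n + 'n) \<Rightarrow> complex" where
  "dual_gram \<omega> x y = (let M = matrix_inv (coef_mat \<omega>) in
     (case (x, y) of
        (Inl j, Inl k) \<Rightarrow> M $ k $ j
      | (Inr j, Inr k) \<Rightarrow> M $ j $ k
      | _ \<Rightarrow> 0))"

definition bijs :: "('n + 'n) set \<Rightarrow> ('n + 'n) set \<Rightarrow> (('n + 'n) \<Rightarrow> ('n + 'n)) set" where
  "bijs A B = {f. bij_betw f A B \<and> (\<forall>x. x \<notin> A \<longrightarrow> f x = undefined)}"

definition basis_ip :: "('n::{finite,linorder}) form \<Rightarrow> ('n + 'n) set \<Rightarrow> ('n + 'n) set \<Rightarrow> complex" where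
  "basis_ip \<omega> A B = (\<Sum>f\<in>bijs A B. bsign f A * (\<Prod>a\<in>A. dual_gram \<omega> a (f a)))"

definition form_ip :: "('n::{finite,linorder}) form \<Rightarrow> 'n form \<Rightarrow> 'n form \<Rightarrow> complex" where
  "form_ip \<omega> \<alpha> \<beta> = (\<Sum>A\<in>UNIV. \<Sum>B\<in>UNIV. \<alpha> A * cnj (\<beta> B) * basis_ip \<omega> A B)"

definition form_adj :: "('n::{finite,linorder}) form \<Rightarrow> ('n form \<Rightarrow> 'n form) \<Rightarrow> 'n form \<Rightarrow> 'n form" where
  "form_adj \<omega> T \<beta> = (THE y. \<forall>x. form_ip \<omega> (T x) \<beta> = form_ip \<omega> x y)"

definition Lambda_op :: "('n::{finite,linorder}) form \<Rightarrow> 'n form \<Rightarrow> 'n form" where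
  "Lambda_op \<rho> = form_adj \<rho> (wedge \<rho>)"

definition form_add_smult :: "('n::{finite,linorder}) form \<Rightarrow> real \<Rightarrow> 'n form \<Rightarrow> 'n form" where
  "form_add_smult \<omega> t \<gamma> = (\<lambda>A. \<omega> A + complex_of_real t * \<gamma> A)"

definition smooth_on :: "real set \<Rightarrow> (real \<Rightarrow> complex) \<Rightarrow> bool" where
  "smooth_on I f \<longleftrightarrow> (\<exists>D::nat \<Rightarrow> real \<Rightarrow> complex. D 0 = f \<and>
      (\<forall>k. \<forall>t\<in>I. (D k has_vector_derivative D (Suc k) t) (at t)))"

end

(*
  The pointwise inner product of forms is a Gram determinant in the dual metric h^{-1}, where
  h is the coefficient matrix of omega.  Laplace expansion along a row shows that exterior
  multiplication by a covector has as adjoint a combination of interior products with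
  coefficients from h^{-1}.  Writing a (1,1)-form beta as a sum of multiples of
  dz_j wedge dzbar_k, the adjoint of beta wedge (.) becomes the double contraction
    y |-> sum_{j,k} conj (i (h^{-1} b h^{-1})_{jk}) iota(dzbar_k) iota(dz_j) y,
  b the coefficient matrix of beta; it is the adjoint because the inner product is
  nondegenerate.  For beta = omega this is the contraction with h^{-1}, so
  Lambda_{omega + t gamma} alpha_t is the contraction of alpha_t with (h + t g)^{-1}.  The product
  rule and d/dt (h + t g)^{-1} = - h^{-1} g h^{-1} at t = 0 give the claim, the second term being
  the contraction of alpha_0 with - h^{-1} g h^{-1}, i.e. -(gamma wedge .)^* alpha_0.
*)
theory Submission
  imports Defs
begin

section \<open>Signs and Gram determinants\<close>

lemma idx_less_irrefl [simp]: "\<not> idx_less x x"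
  by (auto simp: idx_less_def split: sum.splits)

lemma idx_less_asym: "idx_less x y \<Longrightarrow> \<not> idx_less y x"
  by (auto simp: idx_less_def split: sum.splits)

lemma idx_less_linear: "x \<noteq> y \<Longrightarrow> idx_less x y \<or> idx_less y x"
  by (auto simp: idx_less_def split: sum.splits)

lemma idx_less_Inl_Inr [simp]: "idx_less (Inl a) (Inr b)" "\<not> idx_less (Inr b) (Inl a)"
  by (auto simp: idx_less_def)

text \<open>\<open>(-1) ^ idx_rank a A\<close> is the sign in \<open>e\<^sub>a \<and> e\<^sub>A = \<plusminus>e\<^bsub>insert a A\<^esub>\<close>.\<close>

definition idx_rank :: "('n::linorder + 'n) \<Rightarrow> ('n + 'n) set \<Rightarrow> nat" where
  "idx_rank a A = card {x\<in>A. idx_less x a}"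

lemma idx_rank_remove:
  fixes B :: "('n::{finite,linorder} + 'n) set"
  assumes "b \<in> B"
  shows "idx_rank c B = idx_rank c (B - {b}) + (if idx_less b c then 1 else 0)"
proof -
  have "{x\<in>B. idx_less x c} =
      (if idx_less b c then insert b {x\<in>B - {b}. idx_less x c} else {x\<in>B - {b}. idx_less x c})"
    using assms by auto
  then show ?thesis unfolding idx_rank_def by simp
qed

lemma card_filter_split:
  "finite A \<Longrightarrow> card {x\<in>A. P x} = card {x\<in>A. P x \<and> Q x} + card {x\<in>A. P x \<and> \<not> Q x}"
  by (subst card_Un_disjoint[symmetric]) (auto intro: arg_cong[where f = card])

lemma bsign_cong: "(\<And>x. x \<in> A \<Longrightarrow> f x = g x) \<Longrightarrow> bsign f A = bsign g A"
  unfolding bsign_def by (rule arg_cong[where f = "\<lambda>k. (-1) ^ card k"]) auto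

lemma bsign_insert_inversions:
  fixes f :: "('n::{finite,linorder} + 'n) \<Rightarrow> ('n + 'n)"
  assumes aA: "a \<notin> A"
  shows "bsign f (insert a A) = bsign f A *
    (-1) ^ (card {y\<in>A. idx_less a y \<and> idx_less (f y) (f a)} + card {x\<in>A. idx_less x a \<and> idx_less (f a) (f x)})"
proof -
  define S0 where "S0 = {(x, y). x \<in> A \<and> y \<in> A \<and> idx_less x y \<and> idx_less (f y) (f x)}"
  define P where "P = {y\<in>A. idx_less a y \<and> idx_less (f y) (f a)}"
  define Q where "Q = {x\<in>A. idx_less x a \<and> idx_less (f a) (f x)}"
  have inversions: "{(x, y). x \<in> insert a A \<and> y \<in> insert a A \<and> idx_less x y \<and> idx_less (f y) (f x)}
      = S0 \<union> Pair a ` P \<union> (\<lambda>x. (x, a)) ` Q"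
    unfolding S0_def P_def Q_def by auto
  have "S0 \<inter> Pair a ` P = {}" "(S0 \<union> Pair a ` P) \<inter> (\<lambda>x. (x, a)) ` Q = {}"
    using aA by (auto simp: S0_def P_def Q_def)
  then have "card (S0 \<union> Pair a ` P \<union> (\<lambda>x. (x, a)) ` Q) = card S0 + (card P + card Q)"
    by (simp add: card_Un_disjoint card_image inj_on_def)
  then show ?thesis
    unfolding bsign_def inversions S0_def[symmetric] P_def[symmetric] Q_def[symmetric]
    by (simp add: power_add)
qed

lemma bsign_insert:
  fixes f :: "('n::{finite,linorder} + 'n) \<Rightarrow> ('n + 'n)"
  assumes aA: "a \<notin> A" and inj: "inj_on f (insert a A)"
  shows "bsign f (insert a A) =
    bsign f A * (-1) ^ (idx_rank a A + card {x\<in>A. idx_less (f x) (f a)})"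
proof -
  define P where "P = {y\<in>A. idx_less a y \<and> idx_less (f y) (f a)}"
  define Q where "Q = {x\<in>A. idx_less x a \<and> idx_less (f a) (f x)}"
  define W where "W = {x\<in>A. idx_less x a \<and> idx_less (f x) (f a)}"
  have "\<not> idx_less (f x) (f a) \<longleftrightarrow> idx_less (f a) (f x)" if "x \<in> A" for x
    using inj that aA idx_less_linear[of "f x" "f a"] idx_less_asym by (auto simp: inj_on_def)
  then have "{x\<in>A. idx_less x a \<and> \<not> idx_less (f x) (f a)} = Q"
    unfolding Q_def by auto
  then have rank_a: "idx_rank a A = card W + card Q"
    unfolding idx_rank_def W_def
    using card_filter_split[of A "\<lambda>x. idx_less x a" "\<lambda>x. idx_less (f x) (f a)"] by simp
  have "\<not> idx_less x a \<longleftrightarrow> idx_less a x" if "x \<in> A" for x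
    using that aA idx_less_linear[of x a] idx_less_asym by auto
  then have "{x\<in>A. idx_less (f x) (f a) \<and> \<not> idx_less x a} = P"
    unfolding P_def by auto
  moreover have "{x\<in>A. idx_less (f x) (f a) \<and> idx_less x a} = W"
    unfolding W_def by auto
  ultimately have rank_fa: "card {x\<in>A. idx_less (f x) (f a)} = card W + card P"
    using card_filter_split[of A "\<lambda>x. idx_less (f x) (f a)" "\<lambda>x. idx_less x a"] by simp
  have "idx_rank a A + card {x\<in>A. idx_less (f x) (f a)} = (card P + card Q) + 2 * card W"
    unfolding rank_a rank_fa by simp
  then show ?thesis
    unfolding bsign_insert_inversions[OF aA] P_def Q_def by (simp add: power_add power_mult)
qed

text \<open>The minor of \<open>G\<close> with rows \<open>A\<close> and columns \<open>B\<close>; it pairs \<open>e\<^sub>A\<close> with \<open>e\<^sub>B\<close>.\<close>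

definition gram_det ::
    "(('n::{finite,linorder} + 'n) \<Rightarrow> ('n + 'n) \<Rightarrow> complex) \<Rightarrow> ('n + 'n) set \<Rightarrow> ('n + 'n) set \<Rightarrow> complex"
  where "gram_det G A B = (\<Sum>f\<in>bijs A B. bsign f A * (\<Prod>a\<in>A. G a (f a)))"

lemma gram_det_empty: "gram_det G {} B = (if B = {} then 1 else 0)"
proof -
  have "bijs {} B = (if B = {} then {\<lambda>x. undefined} else {})"
    by (auto simp: bijs_def bij_betw_def)
  then show ?thesis by (simp add: gram_det_def bsign_def)
qed

lemma bij_betw_fun_upd_insert:
  assumes "a \<notin> A" "b \<in> B" "bij_betw g A (B - {b})"
  shows "bij_betw (g(a := b)) (insert a A) B"
proof -
  have "bij_betw (g(a := b)) A (B - {b})"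
    using assms(1,3) by (subst bij_betw_cong[of A _ g]) auto
  then have "bij_betw (g(a := b)) (A \<union> {a}) ((B - {b}) \<union> {b})"
    by (rule bij_betw_combine) auto
  then show ?thesis
    using assms(2) by (simp add: insert_absorb)
qed

lemma bsign_fun_upd_insert:
  fixes g :: "('n::{finite,linorder} + 'n) \<Rightarrow> ('n + 'n)"
  assumes aA: "a \<notin> A" and bB: "b \<in> B" and g: "bij_betw g A (B - {b})"
  shows "bsign (g(a := b)) (insert a A) = bsign g A * (-1) ^ (idx_rank a A + idx_rank b (B - {b}))"
proof -
  have inj: "inj_on (g(a := b)) (insert a A)"
    using bij_betw_fun_upd_insert[OF assms] by (simp add: bij_betw_def)
  have "card {x\<in>A. idx_less ((g(a := b)) x) ((g(a := b)) a)} = card {x\<in>A. idx_less (g x) b}"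
    using aA by (intro arg_cong[where f = card]) auto
  also have "\<dots> = card (g ` {x\<in>A. idx_less (g x) b})"
    using g by (intro card_image[symmetric]) (auto simp: bij_betw_def inj_on_def)
  also have "g ` {x\<in>A. idx_less (g x) b} = {y\<in>g ` A. idx_less y b}"
    by auto
  also have "g ` A = B - {b}"
    using g by (simp add: bij_betw_def)
  finally have "card {x\<in>A. idx_less ((g(a := b)) x) ((g(a := b)) a)} = idx_rank b (B - {b})"
    by (simp add: idx_rank_def)
  moreover have "bsign (g(a := b)) A = bsign g A"
    by (rule bsign_cong) (use aA in auto)
  ultimately show ?thesis
    using bsign_insert[OF aA inj] by simp
qed

lemma sum_bijs_insert:
  fixes A B :: "('n::finite + 'n) set"
  assumes aA: "a \<notin> A"
  shows "(\<Sum>f\<in>bijs (insert a A) B. F f) = (\<Sum>b\<in>B. \<Sum>g\<in>bijs A (B - {b}). F (g(a := b)))"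
proof -
  have "(\<Sum>b\<in>B. \<Sum>g\<in>bijs A (B - {b}). F (g(a := b)))
      = (\<Sum>(b, g)\<in>Sigma B (\<lambda>b. bijs A (B - {b})). F (g(a := b)))"
    by (simp add: sum.Sigma)
  also have "\<dots> = (\<Sum>f\<in>bijs (insert a A) B. F f)"
  proof (rule sum.reindex_bij_witness[where i = "\<lambda>f. (f a, f(a := undefined))"
        and j = "\<lambda>(b, g). g(a := b)"])
    fix s assume "s \<in> Sigma B (\<lambda>b. bijs A (B - {b}))"
    then obtain b g where s: "s = (b, g)" and bB: "b \<in> B" and g: "bij_betw g A (B - {b})"
        and undef: "\<forall>x. x \<notin> A \<longrightarrow> g x = undefined"
      by (auto simp: bijs_def)
    show "(\<lambda>f. (f a, f(a := undefined))) ((\<lambda>(b, g). g(a := b)) s) = s"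
      using undef aA s by auto
    show "(\<lambda>(b, g). g(a := b)) s \<in> bijs (insert a A) B"
      using bij_betw_fun_upd_insert[OF aA bB g] undef s by (auto simp: bijs_def)
  next
    fix f assume "f \<in> bijs (insert a A) B"
    then have f: "bij_betw f (insert a A) B" and undef: "\<forall>x. x \<notin> insert a A \<longrightarrow> f x = undefined"
      by (auto simp: bijs_def)
    show "(\<lambda>(b, g). g(a := b)) ((\<lambda>f. (f a, f(a := undefined))) f) = f" by auto
    have "f ` A = B - {f a}"
      using f aA unfolding bij_betw_def inj_on_insert by blast
    then have "bij_betw f A (B - {f a})"
      using f by (rule bij_betw_subset[rotated 2]) auto
    then have "bij_betw (f(a := undefined)) A (B - {f a})"
      using aA by (subst bij_betw_cong[of A _ f]) auto
    moreover have "f a \<in> B"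
      using f by (auto simp: bij_betw_def)
    ultimately show "(\<lambda>f. (f a, f(a := undefined))) f \<in> Sigma B (\<lambda>b. bijs A (B - {b}))"
      using undef by (auto simp: bijs_def)
  qed auto
  finally show ?thesis ..
qed

lemma gram_det_laplace:
  fixes G :: "('n::{finite,linorder} + 'n) \<Rightarrow> ('n + 'n) \<Rightarrow> complex"
  assumes aA: "a \<notin> A"
  shows "gram_det G (insert a A) B =
    (-1) ^ idx_rank a A * (\<Sum>b\<in>B. (-1) ^ idx_rank b (B - {b}) * G a b * gram_det G A (B - {b}))"
proof -
  have "bsign (g(a := b)) (insert a A) * (\<Prod>x\<in>insert a A. G x ((g(a := b)) x)) =
      (-1) ^ idx_rank a A * ((-1) ^ idx_rank b (B - {b}) * G a b * (bsign g A * (\<Prod>x\<in>A. G x (g x))))"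
    if "b \<in> B" and "g \<in> bijs A (B - {b})" for b g
  proof -
    have "(\<Prod>x\<in>A. G x ((g(a := b)) x)) = (\<Prod>x\<in>A. G x (g x))"
      using aA by (intro prod.cong) auto
    then show ?thesis
      using bsign_fun_upd_insert[OF aA that(1)] that(2) aA by (simp add: bijs_def power_add mult_ac)
  qed
  then show ?thesis
    unfolding gram_det_def sum_bijs_insert[OF aA] by (simp add: sum_distrib_left)
qed

lemma sum_offdiag_antisym:
  fixes F :: "'a \<Rightarrow> 'a \<Rightarrow> 'b::field_char_0"
  assumes "finite B" and anti: "\<And>b c. b \<in> B \<Longrightarrow> c \<in> B \<Longrightarrow> b \<noteq> c \<Longrightarrow> F c b = - F b c"
  shows "(\<Sum>b\<in>B. \<Sum>c\<in>B - {b}. F b c) = 0"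
proof -
  define H where "H b c = (if b = c then 0 else F b c)" for b c
  have "(\<Sum>b\<in>B. \<Sum>c\<in>B - {b}. F b c) = (\<Sum>b\<in>B. \<Sum>c\<in>B. H b c)"
    using \<open>finite B\<close> by (intro sum.cong refl sum.mono_neutral_cong_left) (auto simp: H_def)
  also have "\<dots> = 0"
  proof -
    have "(\<Sum>b\<in>B. \<Sum>c\<in>B. H b c) = (\<Sum>c\<in>B. \<Sum>b\<in>B. H b c)"
      by (rule sum.swap)
    also have "\<dots> = (\<Sum>c\<in>B. \<Sum>b\<in>B. - H c b)"
    proof (intro sum.cong refl)
      fix b c assume "c \<in> B" "b \<in> B"
      then show "H b c = - H c b"
        by (cases "b = c") (simp_all add: H_def anti[of c b])
    qed
    also have "\<dots> = - (\<Sum>b\<in>B. \<Sum>c\<in>B. H b c)"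
      by (simp add: sum_negf)
    finally show ?thesis
      by (simp add: eq_neg_iff_add_eq_0 flip: mult_2)
  qed
  finally show ?thesis .
qed

text \<open>The left-hand side is the Laplace expansion of a minor in which row \<open>a\<close> occurs twice.\<close>

lemma gram_det_laplace_repeated_row:
  fixes G :: "('n::{finite,linorder} + 'n) \<Rightarrow> ('n + 'n) \<Rightarrow> complex"
  assumes aA: "a \<in> A"
  shows "(\<Sum>b\<in>B. (-1) ^ idx_rank b (B - {b}) * G a b * gram_det G A (B - {b})) = 0"
proof -
  define A0 where "A0 = A - {a}"
  have A: "A = insert a A0" and a0: "a \<notin> A0" using aA by (auto simp: A0_def)
  define F where "F b c = (-1) ^ idx_rank b (B - {b}) * (-1) ^ idx_rank c (B - {b} - {c}) *
      G a b * G a c * gram_det G A0 (B - {b} - {c})" for b c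
  have "(\<Sum>b\<in>B. (-1) ^ idx_rank b (B - {b}) * G a b * gram_det G A (B - {b}))
      = (-1) ^ idx_rank a A0 * (\<Sum>b\<in>B. \<Sum>c\<in>B - {b}. F b c)"
    unfolding A gram_det_laplace[OF a0] F_def by (simp add: sum_distrib_left mult_ac)
  also have "(\<Sum>b\<in>B. \<Sum>c\<in>B - {b}. F b c) = 0"
  proof (rule sum_offdiag_antisym)
    fix b c assume b: "b \<in> B" and c: "c \<in> B" and bc: "b \<noteq> c"
    have swap: "B - {c} - {b} = B - {b} - {c}" by auto
    have "idx_rank c (B - {c}) = idx_rank c (B - {b} - {c}) + (if idx_less b c then 1 else 0)"
      using b bc idx_rank_remove[of b "B - {c}" c] by (simp add: swap)
    moreover have "idx_rank b (B - {b}) = idx_rank b (B - {b} - {c}) + (if idx_less c b then 1 else 0)"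
      using c bc by (intro idx_rank_remove) auto
    moreover have "idx_less b c \<longleftrightarrow> \<not> idx_less c b"
      using idx_less_linear[OF bc] idx_less_asym by blast
    ultimately show "F c b = - F b c"
      unfolding F_def by (simp add: power_add swap mult_ac)
  qed simp
  finally show ?thesis by simp
qed

section \<open>Exterior and interior multiplication\<close>

definition gram_ip ::
    "(('n::{finite,linorder} + 'n) \<Rightarrow> ('n + 'n) \<Rightarrow> complex) \<Rightarrow> 'n form \<Rightarrow> 'n form \<Rightarrow> complex"
  where "gram_ip G x y = (\<Sum>A\<in>UNIV. \<Sum>B\<in>UNIV. x A * cnj (y B) * gram_det G A B)"

lemma form_ip_eq_gram_ip: "form_ip \<omega> = gram_ip (dual_gram \<omega>)"
  by (simp add: fun_eq_iff form_ip_def gram_ip_def basis_ip_def gram_det_def)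

lemma gram_ip_sum_left: "gram_ip G (\<lambda>C. \<Sum>p\<in>P. f p C) y = (\<Sum>p\<in>P. gram_ip G (f p) y)"
  unfolding gram_ip_def by (simp add: sum_distrib_right sum.swap[of _ P])

lemma gram_ip_sum_right: "gram_ip G x (\<lambda>B. \<Sum>p\<in>P. f p B) = (\<Sum>p\<in>P. gram_ip G x (f p))"
  unfolding gram_ip_def by (simp add: sum_distrib_left sum_distrib_right sum.swap[of _ P])

lemma gram_ip_scale_left: "gram_ip G (\<lambda>C. c * f C) y = c * gram_ip G f y"
  unfolding gram_ip_def by (simp add: sum_distrib_left mult_ac)

lemma gram_ip_scale_right: "gram_ip G x (\<lambda>B. c * f B) = cnj c * gram_ip G x f"
  unfolding gram_ip_def by (simp add: sum_distrib_left mult_ac)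

lemma gram_ip_diff_right: "gram_ip G x (\<lambda>B. f B - g B) = gram_ip G x f - gram_ip G x g"
  unfolding gram_ip_def by (simp add: sum_subtractf ring_distribs)

text \<open>\<open>emul a x\<close> is \<open>e\<^sub>a \<and> x\<close>; \<open>contr b y\<close> is the contraction of \<open>y\<close> with the vector dual to \<open>e\<^sub>b\<close>.\<close>

definition emul :: "('n::{finite,linorder} + 'n) \<Rightarrow> 'n form \<Rightarrow> 'n form" where
  "emul a x = (\<lambda>C. if a \<in> C then (-1) ^ idx_rank a (C - {a}) * x (C - {a}) else 0)"

definition contr :: "('n::{finite,linorder} + 'n) \<Rightarrow> 'n form \<Rightarrow> 'n form" where
  "contr b y = (\<lambda>B. if b \<in> B then 0 else (-1) ^ idx_rank b B * y (insert b B))"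

definition emul_adj ::
    "(('n::{finite,linorder} + 'n) \<Rightarrow> ('n + 'n) \<Rightarrow> complex) \<Rightarrow> ('n + 'n) \<Rightarrow> 'n form \<Rightarrow> 'n form"
  where "emul_adj G a y = (\<lambda>B. \<Sum>b\<in>UNIV. cnj (G a b) * contr b y B)"

lemma sum_insert_reindex:
  "(\<Sum>B\<in>{B. b \<notin> B}. F (insert b B) B) = (\<Sum>C\<in>{C. b \<in> C}. F C (C - {b}))"
  by (rule sum.reindex_bij_witness[where i = "\<lambda>C. C - {b}" and j = "insert b"]) auto

lemma sum_laplace_eq_emul_adj:
  fixes G :: "('n::{finite,linorder} + 'n) \<Rightarrow> ('n + 'n) \<Rightarrow> complex"
  shows "(\<Sum>C\<in>UNIV. cnj (y C) * (\<Sum>b\<in>C. (-1) ^ idx_rank b (C - {b}) * G a b * gram_det G A (C - {b})))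
       = (\<Sum>B\<in>UNIV. cnj (emul_adj G a y B) * gram_det G A B)"
proof -
  define h where "h b C B = G a b * (-1) ^ idx_rank b B * cnj (y C) * gram_det G A B" for b C B
  have "(\<Sum>B\<in>UNIV. cnj (emul_adj G a y B) * gram_det G A B)
      = (\<Sum>B\<in>UNIV. \<Sum>b\<in>UNIV. G a b * cnj (contr b y B) * gram_det G A B)"
    unfolding emul_adj_def by (simp add: sum_distrib_left sum_distrib_right mult_ac)
  also have "\<dots> = (\<Sum>b\<in>UNIV. \<Sum>B\<in>UNIV. G a b * cnj (contr b y B) * gram_det G A B)"
    by (rule sum.swap)
  also have "\<dots> = (\<Sum>b\<in>UNIV. \<Sum>B\<in>{B. b \<notin> B}. h b (insert b B) B)"
    by (intro sum.cong refl sum.mono_neutral_cong_right) (auto simp: contr_def h_def)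
  also have "\<dots> = (\<Sum>b\<in>UNIV. \<Sum>C\<in>{C\<in>UNIV. b \<in> C}. h b C (C - {b}))"
    by (simp add: sum_insert_reindex)
  also have "\<dots> = (\<Sum>C\<in>UNIV. \<Sum>b\<in>{b\<in>UNIV. b \<in> C}. h b C (C - {b}))"
    by (rule sum.swap_restrict) auto
  also have "\<dots> = (\<Sum>C\<in>UNIV. cnj (y C) * (\<Sum>b\<in>C. (-1) ^ idx_rank b (C - {b}) * G a b * gram_det G A (C - {b})))"
    by (simp add: h_def sum_distrib_left mult_ac)
  finally show ?thesis ..
qed

lemma gram_ip_emul:
  fixes G :: "('n::{finite,linorder} + 'n) \<Rightarrow> ('n + 'n) \<Rightarrow> complex"
  shows "gram_ip G (emul a x) y = gram_ip G x (emul_adj G a y)"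
proof -
  define R where "R A = (\<Sum>C\<in>UNIV. cnj (y C) *
      (\<Sum>b\<in>C. (-1) ^ idx_rank b (C - {b}) * G a b * gram_det G A (C - {b})))" for A
  have "gram_ip G (emul a x) y = (\<Sum>C\<in>{C. a \<in> C}. \<Sum>B\<in>UNIV. emul a x C * cnj (y B) * gram_det G C B)"
    unfolding gram_ip_def by (rule sum.mono_neutral_cong_right) (auto simp: emul_def)
  also have "\<dots> = (\<Sum>A\<in>{A. a \<notin> A}. \<Sum>B\<in>UNIV. emul a x (insert a A) * cnj (y B) * gram_det G (insert a A) B)"
    by (rule sum_insert_reindex[symmetric])
  also have "\<dots> = (\<Sum>A\<in>{A. a \<notin> A}. x A * R A)"
  proof (rule sum.cong[OF refl])
    fix A assume "A \<in> {A. a \<notin> A}"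
    then have aA: "a \<notin> A" by simp
    have "(-1::complex) ^ idx_rank a A * (-1) ^ idx_rank a A = 1"
      by (simp flip: power_add mult_2)
    then show "(\<Sum>B\<in>UNIV. emul a x (insert a A) * cnj (y B) * gram_det G (insert a A) B) = x A * R A"
      unfolding R_def emul_def gram_det_laplace[OF aA] using aA
      by (simp add: sum_distrib_left mult_ac)
  qed
  also have "\<dots> = (\<Sum>A\<in>UNIV. x A * R A)"
    by (rule sum.mono_neutral_cong_left) (auto simp: R_def gram_det_laplace_repeated_row)
  also have "\<dots> = gram_ip G x (emul_adj G a y)"
    unfolding gram_ip_def R_def sum_laplace_eq_emul_adj by (simp add: sum_distrib_left mult_ac)
  finally show ?thesis .
qed

lemma bideg_11_support:
  fixes \<beta> :: "('n::{finite,linorder}) form"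
  assumes "bideg 1 1 \<beta>" "\<beta> A \<noteq> 0"
  obtains j k where "A = {Inl j, Inr k}"
proof -
  obtain j where j: "{j. Inl j \<in> A} = {j}" and k0: "card {j. Inr j \<in> A} = 1"
    using assms card_1_singletonE unfolding bideg_def by metis
  obtain k where k: "{j. Inr j \<in> A} = {k}"
    using k0 card_1_singletonE by blast
  have "A = {Inl j, Inr k}"
  proof (intro equalityI subsetI)
    fix x assume "x \<in> A"
    then show "x \<in> {Inl j, Inr k}" using j k by (cases x) auto
  qed (use j k in auto)
  then show ?thesis by (rule that)
qed

lemma shuffle_sign_pair:
  fixes C :: "('n::{finite,linorder} + 'n) set"
  shows "shuffle_sign {Inl j, Inr k} (C - {Inl j, Inr k}) =
    (-1) ^ idx_rank (Inl j) (C - {Inl j}) * (-1) ^ idx_rank (Inr k) (C - {Inl j} - {Inr k})"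
proof -
  define R where "R = C - {Inl j, Inr k}"
  have pairs: "{(a, b). a \<in> {Inl j, Inr k} \<and> b \<in> R \<and> idx_less b a}
      = Pair (Inl j) ` {b\<in>R. idx_less b (Inl j)} \<union> Pair (Inr k) ` {b\<in>R. idx_less b (Inr k)}"
    by auto
  have "card {(a, b). a \<in> {Inl j, Inr k} \<and> b \<in> R \<and> idx_less b a}
      = card {b\<in>R. idx_less b (Inl j)} + card {b\<in>R. idx_less b (Inr k)}"
    unfolding pairs by (subst card_Un_disjoint) (auto simp: card_image inj_on_def)
  moreover have "idx_rank (Inl j) (C - {Inl j}) = card {b\<in>R. idx_less b (Inl j)}"
    unfolding idx_rank_def R_def by (rule arg_cong[where f = card]) auto
  moreover have "idx_rank (Inr k) (C - {Inl j} - {Inr k}) = card {b\<in>R. idx_less b (Inr k)}"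
    unfolding idx_rank_def R_def by (rule arg_cong[where f = card]) auto
  ultimately show ?thesis
    unfolding shuffle_sign_def R_def[symmetric] by (simp add: power_add)
qed

lemma emul_emul:
  "emul (Inl j) (emul (Inr k) x) C =
    (if Inl j \<in> C \<and> Inr k \<in> C
     then (-1) ^ idx_rank (Inl j) (C - {Inl j}) * (-1) ^ idx_rank (Inr k) (C - {Inl j} - {Inr k})
       * x (C - {Inl j, Inr k})
     else 0)"
proof -
  have "C - {Inl j} - {Inr k} = C - {Inl j, Inr k}" by auto
  then show ?thesis unfolding emul_def by auto
qed

lemma wedge_bideg_11:
  fixes \<beta> x :: "('n::{finite,linorder}) form"
  assumes \<beta>: "bideg 1 1 \<beta>"
  shows "wedge \<beta> x C = (\<Sum>j\<in>UNIV. \<Sum>k\<in>UNIV. \<beta> {Inl j, Inr k} * emul (Inl j) (emul (Inr k) x) C)"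
proof -
  define pair where "pair = (\<lambda>(j::'n, k::'n). {Inl j, Inr k})"
  define S where "S = {(j, k). Inl j \<in> C \<and> Inr k \<in> C}"
  define h where "h A = shuffle_sign A (C - A) * \<beta> A * x (C - A)" for A
  have "wedge \<beta> x C = (\<Sum>A\<in>pair ` S. h A)"
    unfolding wedge_def h_def[symmetric]
  proof (rule sum.mono_neutral_right)
    show "\<forall>A\<in>Pow C - pair ` S. h A = 0"
    proof
      fix A assume A: "A \<in> Pow C - pair ` S"
      show "h A = 0"
      proof (cases "\<beta> A = 0")
        case False
        then obtain j k where "A = {Inl j, Inr k}" using bideg_11_support[OF \<beta>] by blast
        then show ?thesis using A unfolding pair_def S_def by (auto simp: image_iff)
      qed (simp add: h_def)
    qed
  qed (auto simp: pair_def S_def)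
  also have "\<dots> = (\<Sum>p\<in>S. h (pair p))"
    by (rule sum.reindex_cong[of pair]) (auto simp: inj_on_def pair_def S_def doubleton_eq_iff)
  also have "\<dots> = (\<Sum>(j, k)\<in>UNIV. \<beta> {Inl j, Inr k} * emul (Inl j) (emul (Inr k) x) C)"
    by (rule sum.mono_neutral_cong_left)
      (auto simp: S_def pair_def h_def emul_emul shuffle_sign_pair mult_ac split: if_splits)
  finally show ?thesis
    by (simp add: sum.cartesian_product flip: UNIV_Times_UNIV)
qed

definition wedge_adj ::
    "(('n::{finite,linorder} + 'n) \<Rightarrow> ('n + 'n) \<Rightarrow> complex) \<Rightarrow> 'n form \<Rightarrow> 'n form \<Rightarrow> 'n form"
  where "wedge_adj G \<beta> y = (\<lambda>A. \<Sum>j\<in>UNIV. \<Sum>k\<in>UNIV.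
      cnj (\<beta> {Inl j, Inr k}) * emul_adj G (Inr k) (emul_adj G (Inl j) y) A)"

lemma gram_ip_wedge:
  fixes \<beta> :: "('n::{finite,linorder}) form"
  assumes "bideg 1 1 \<beta>"
  shows "gram_ip G (wedge \<beta> x) y = gram_ip G x (wedge_adj G \<beta> y)"
proof -
  have "gram_ip G (wedge \<beta> x) y =
      (\<Sum>j\<in>UNIV. \<Sum>k\<in>UNIV. \<beta> {Inl j, Inr k} * gram_ip G (emul (Inl j) (emul (Inr k) x)) y)"
    unfolding wedge_bideg_11[OF assms] gram_ip_sum_left gram_ip_scale_left ..
  also have "\<dots> = gram_ip G x (wedge_adj G \<beta> y)"
    unfolding gram_ip_emul wedge_adj_def gram_ip_sum_right gram_ip_scale_right by simp
  finally show ?thesis .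
qed

section \<open>The adjoint in coordinates\<close>

text \<open>Induction on \<open>card B\<close>: a contraction of \<open>z\<close> is a combination of the \<open>emul_adj G a z\<close>,
  hence again orthogonal to everything, and it has one degree less.\<close>

lemma gram_ip_nondegenerate:
  fixes G :: "('n::{finite,linorder} + 'n) \<Rightarrow> ('n + 'n) \<Rightarrow> complex" and z :: "'n form"
  assumes span: "\<And>b. \<exists>c. \<forall>y. contr b y = (\<lambda>B. \<Sum>a\<in>UNIV. c a * emul_adj G a y B)"
    and orth: "\<And>x. gram_ip G x z = 0"
  shows "z B = 0"
  using orth
proof (induction "card B" arbitrary: z B)
  case 0
  define x0 :: "'n form" where "x0 A = (if A = {} then 1 else 0)" for A
  have "gram_ip G x0 z = cnj (z {})"
    unfolding gram_ip_def x0_def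
    by (subst (1 2) sum.mono_neutral_right[of UNIV "{{}}"]) (auto simp: gram_det_empty)
  then show ?case
    using "0" by simp
next
  case (Suc m)
  then obtain b where b: "b \<in> B"
    by fastforce
  obtain c where c: "\<forall>y. contr b y = (\<lambda>B. \<Sum>a\<in>UNIV. c a * emul_adj G a y B)"
    using span by blast
  have "gram_ip G x (contr b z) = 0" for x
    unfolding c[rule_format] gram_ip_sum_right gram_ip_scale_right
    by (simp add: gram_ip_emul[symmetric] Suc.prems)
  moreover have "m = card (B - {b})"
    using Suc.hyps(2) b by simp
  ultimately have "contr b z (B - {b}) = 0"
    using Suc.hyps(1) by blast
  then show "z B = 0"
    using b by (simp add: contr_def insert_absorb)
qed

definition gram_of_matrix :: "complex ^ 'n ^ 'n \<Rightarrow> ('n + 'n) \<Rightarrow> ('n + 'n) \<Rightarrow> complex" where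
  "gram_of_matrix M x y =
    (case (x, y) of (Inl j, Inl k) \<Rightarrow> M $ k $ j | (Inr j, Inr k) \<Rightarrow> M $ j $ k | _ \<Rightarrow> 0)"

lemma dual_gram_eq: "dual_gram \<omega> = gram_of_matrix (matrix_inv (coef_mat \<omega>))"
  by (auto simp: dual_gram_def gram_of_matrix_def Let_def fun_eq_iff split: sum.splits)

lemma sum_UNIV_Plus:
  "(\<Sum>a\<in>(UNIV::('a::finite + 'b::finite) set). f a) = (\<Sum>j\<in>UNIV. f (Inl j)) + (\<Sum>k\<in>UNIV. f (Inr k))"
  using sum.Plus[of UNIV UNIV f] by (simp add: comp_def)

lemma emul_adj_gram_of_matrix_Inl:
  "emul_adj (gram_of_matrix M) (Inl j) y B = (\<Sum>k\<in>UNIV. cnj (M $ k $ j) * contr (Inl k) y B)"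
  unfolding emul_adj_def sum_UNIV_Plus by (simp add: gram_of_matrix_def)

lemma emul_adj_gram_of_matrix_Inr:
  "emul_adj (gram_of_matrix M) (Inr j) y B = (\<Sum>k\<in>UNIV. cnj (M $ j $ k) * contr (Inr k) y B)"
  unfolding emul_adj_def sum_UNIV_Plus by (simp add: gram_of_matrix_def)

lemma sum_mat_1_left: "(\<Sum>k\<in>UNIV. cnj (mat 1 $ k $ k0) * f k) = (f k0 :: complex)"
  and sum_mat_1_right: "(\<Sum>k\<in>UNIV. cnj (mat 1 $ k0 $ k) * f k) = f k0"
  by (subst sum.mono_neutral_right[of UNIV "{k0}"]; auto simp: mat_def)+

lemma contr_Inl_eq_emul_adj:
  assumes "M ** h = mat 1"
  shows "contr (Inl k0) y B = (\<Sum>j\<in>UNIV. cnj (h $ j $ k0) * emul_adj (gram_of_matrix M) (Inl j) y B)"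
proof -
  have "(\<Sum>j\<in>UNIV. cnj (h $ j $ k0) * emul_adj (gram_of_matrix M) (Inl j) y B)
      = (\<Sum>j\<in>UNIV. \<Sum>k\<in>UNIV. cnj (h $ j $ k0) * (cnj (M $ k $ j) * contr (Inl k) y B))"
    by (simp add: emul_adj_gram_of_matrix_Inl sum_distrib_left)
  also have "\<dots> = (\<Sum>k\<in>UNIV. \<Sum>j\<in>UNIV. cnj (h $ j $ k0) * (cnj (M $ k $ j) * contr (Inl k) y B))"
    by (rule sum.swap)
  also have "\<dots> = (\<Sum>k\<in>UNIV. cnj ((M ** h) $ k $ k0) * contr (Inl k) y B)"
    by (simp add: matrix_matrix_mult_def sum_distrib_left sum_distrib_right cnj_sum
        mult.left_commute mult.commute)
  finally show ?thesis
    by (simp add: assms sum_mat_1_left)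
qed

lemma contr_Inr_eq_emul_adj:
  assumes "h ** M = mat 1"
  shows "contr (Inr k0) y B = (\<Sum>j\<in>UNIV. cnj (h $ k0 $ j) * emul_adj (gram_of_matrix M) (Inr j) y B)"
proof -
  have "(\<Sum>j\<in>UNIV. cnj (h $ k0 $ j) * emul_adj (gram_of_matrix M) (Inr j) y B)
      = (\<Sum>j\<in>UNIV. \<Sum>k\<in>UNIV. cnj (h $ k0 $ j) * (cnj (M $ j $ k) * contr (Inr k) y B))"
    by (simp add: emul_adj_gram_of_matrix_Inr sum_distrib_left)
  also have "\<dots> = (\<Sum>k\<in>UNIV. \<Sum>j\<in>UNIV. cnj (h $ k0 $ j) * (cnj (M $ j $ k) * contr (Inr k) y B))"
    by (rule sum.swap)
  also have "\<dots> = (\<Sum>k\<in>UNIV. cnj ((h ** M) $ k0 $ k) * contr (Inr k) y B)"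
    by (simp add: matrix_matrix_mult_def sum_distrib_right cnj_sum mult.assoc)
  finally show ?thesis
    by (simp add: assms sum_mat_1_right)
qed

lemma contr_in_span_emul_adj:
  fixes M :: "complex ^ ('n::{finite,linorder}) ^ ('n::{finite,linorder})"
  assumes "invertible M"
  shows "\<exists>c. \<forall>y. contr b y = (\<lambda>B. \<Sum>a\<in>UNIV. c a * emul_adj (gram_of_matrix M) a y B)"
proof -
  obtain h where "M ** h = mat 1" and "h ** M = mat 1"
    using assms by (auto simp: invertible_def)
  then show ?thesis
  proof (cases b)
    case (Inl k0)
    then show ?thesis
      using contr_Inl_eq_emul_adj[OF \<open>M ** h = mat 1\<close>]
      by (intro exI[of _ "case_sum (\<lambda>j. cnj (h $ j $ k0)) (\<lambda>_. 0)"]) (simp add: fun_eq_iff sum_UNIV_Plus)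
  next
    case (Inr k0)
    then show ?thesis
      using contr_Inr_eq_emul_adj[OF \<open>h ** M = mat 1\<close>]
      by (intro exI[of _ "case_sum (\<lambda>_. 0) (\<lambda>j. cnj (h $ k0 $ j))"]) (simp add: fun_eq_iff sum_UNIV_Plus)
  qed
qed

lemma matrix_inv_inverse:
  assumes "invertible A"
  shows "A ** matrix_inv A = mat 1" and "matrix_inv A ** A = mat 1"
proof -
  have "A ** matrix_inv A = mat 1 \<and> matrix_inv A ** A = mat 1"
    unfolding matrix_inv_def by (rule someI_ex) (use assms in \<open>simp add: invertible_def\<close>)
  then show "A ** matrix_inv A = mat 1" and "matrix_inv A ** A = mat 1"
    by auto
qed

lemma invertible_matrix_inv: "invertible A \<Longrightarrow> invertible (matrix_inv A)"
  using matrix_inv_inverse invertible_def by blast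

lemma hermitian_metric_invertible:
  assumes "hermitian_metric \<rho>"
  shows "invertible (coef_mat \<rho>)"
proof -
  define h where "h = coef_mat \<rho>"
  have ker: "w = 0" if hw: "h *v w = 0" for w
  proof (rule ccontr)
    assume "w \<noteq> 0"
    define v where "v = (\<chi> k. cnj (w $ k))"
    have "v \<noteq> 0"
      using \<open>w \<noteq> 0\<close> by (auto simp: v_def vec_eq_iff)
    then have "0 < Re (\<Sum>j\<in>UNIV. \<Sum>k\<in>UNIV. h $ j $ k * v $ j * cnj (v $ k))"
      using assms unfolding hermitian_metric_def h_def by blast
    also have "(\<Sum>j\<in>UNIV. \<Sum>k\<in>UNIV. h $ j $ k * v $ j * cnj (v $ k)) = (\<Sum>j\<in>UNIV. v $ j * (h *v w) $ j)"
      unfolding v_def matrix_vector_mult_def by (simp add: sum_distrib_left mult_ac)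
    finally show False
      using hw by simp
  qed
  have "inj ((*v) h)"
  proof (rule injI)
    fix x y assume "h *v x = h *v y"
    then have "h *v (x - y) = 0"
      by (simp add: matrix_vector_mult_diff_distrib)
    then show "x = y"
      using ker by fastforce
  qed
  then show ?thesis
    using det_nz_iff_inj_gen[of "(*v) h"] by (simp add: h_def invertible_det_nz)
qed

lemma form_adj_eqI:
  assumes "hermitian_metric \<omega>" and adj: "\<And>x. form_ip \<omega> (T x) y = form_ip \<omega> x y'"
  shows "form_adj \<omega> T y = y'"
  unfolding form_adj_def
proof (rule the_equality)
  show "\<forall>x. form_ip \<omega> (T x) y = form_ip \<omega> x y'"
    using adj by blast
  have span: "\<exists>c. \<forall>y. contr b y = (\<lambda>B. \<Sum>a\<in>UNIV. c a * emul_adj (dual_gram \<omega>) a y B)" for b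
    unfolding dual_gram_eq
    by (intro contr_in_span_emul_adj invertible_matrix_inv hermitian_metric_invertible assms(1))
  fix y'' assume "\<forall>x. form_ip \<omega> (T x) y = form_ip \<omega> x y''"
  then have "gram_ip (dual_gram \<omega>) x (\<lambda>B. y'' B - y' B) = 0" for x
    using adj by (simp add: gram_ip_diff_right form_ip_eq_gram_ip)
  then have "y'' B - y' B = 0" for B
    using gram_ip_nondegenerate[OF span] by blast
  then show "y'' = y'"
    by (simp add: fun_eq_iff)
qed

lemma form_adj_wedge:
  assumes "hermitian_metric \<omega>" and "bideg 1 1 \<beta>"
  shows "form_adj \<omega> (wedge \<beta>) y = wedge_adj (dual_gram \<omega>) \<beta> y"
  using assms by (intro form_adj_eqI) (simp_all add: form_ip_eq_gram_ip gram_ip_wedge)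

definition contract ::
    "complex ^ ('n::{finite,linorder}) ^ ('n::{finite,linorder}) \<Rightarrow> 'n form \<Rightarrow> 'n form"
  where
  "contract M y = (\<lambda>A. \<Sum>j\<in>UNIV. \<Sum>k\<in>UNIV. cnj (\<i> * M $ j $ k) * contr (Inr k) (contr (Inl j) y) A)"

lemma contract_uminus: "contract (- M) y A = - contract M y A"
  by (simp add: contract_def sum_negf)

lemma contr_linear: "contr b (\<lambda>B. \<Sum>p\<in>P. c p * f p B) A = (\<Sum>p\<in>P. c p * contr b (f p) A)"
  unfolding contr_def by (simp add: sum_distrib_left mult_ac)

lemma sum_reverse_4:
  fixes f :: "'a::finite \<Rightarrow> 'b::finite \<Rightarrow> 'c::finite \<Rightarrow> 'd::finite \<Rightarrow> 'e::comm_monoid_add"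
  shows "(\<Sum>a\<in>UNIV. \<Sum>b\<in>UNIV. \<Sum>c\<in>UNIV. \<Sum>d\<in>UNIV. f a b c d)
       = (\<Sum>d\<in>UNIV. \<Sum>c\<in>UNIV. \<Sum>b\<in>UNIV. \<Sum>a\<in>UNIV. f a b c d)"
proof -
  have "(\<Sum>a\<in>UNIV. \<Sum>b\<in>UNIV. \<Sum>c\<in>UNIV. \<Sum>d\<in>UNIV. f a b c d)
      = (\<Sum>a\<in>UNIV. \<Sum>b\<in>UNIV. \<Sum>d\<in>UNIV. \<Sum>c\<in>UNIV. f a b c d)"
    by (rule sum.cong[OF refl], rule sum.cong[OF refl], rule sum.swap)
  also have "\<dots> = (\<Sum>a\<in>UNIV. \<Sum>d\<in>UNIV. \<Sum>b\<in>UNIV. \<Sum>c\<in>UNIV. f a b c d)"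
    by (rule sum.cong[OF refl], rule sum.swap)
  also have "\<dots> = (\<Sum>d\<in>UNIV. \<Sum>a\<in>UNIV. \<Sum>b\<in>UNIV. \<Sum>c\<in>UNIV. f a b c d)"
    by (rule sum.swap)
  also have "\<dots> = (\<Sum>d\<in>UNIV. \<Sum>a\<in>UNIV. \<Sum>c\<in>UNIV. \<Sum>b\<in>UNIV. f a b c d)"
    by (rule sum.cong[OF refl], rule sum.cong[OF refl], rule sum.swap)
  also have "\<dots> = (\<Sum>d\<in>UNIV. \<Sum>c\<in>UNIV. \<Sum>a\<in>UNIV. \<Sum>b\<in>UNIV. f a b c d)"
    by (rule sum.cong[OF refl], rule sum.swap)
  also have "\<dots> = (\<Sum>d\<in>UNIV. \<Sum>c\<in>UNIV. \<Sum>b\<in>UNIV. \<Sum>a\<in>UNIV. f a b c d)"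
    by (rule sum.cong[OF refl], rule sum.cong[OF refl], rule sum.swap)
  finally show ?thesis .
qed

lemma wedge_adj_gram_of_matrix:
  "wedge_adj (gram_of_matrix M) \<beta> y = contract ((M ** coef_mat \<beta>) ** M) y"
proof
  fix A
  have "wedge_adj (gram_of_matrix M) \<beta> y A = (\<Sum>j\<in>UNIV. \<Sum>k\<in>UNIV. \<Sum>k'\<in>UNIV. \<Sum>j'\<in>UNIV.
      cnj (M $ j' $ j * \<beta> {Inl j, Inr k} * M $ k $ k') * contr (Inr k') (contr (Inl j') y) A)"
    unfolding wedge_adj_def emul_adj_gram_of_matrix_Inr
      emul_adj_gram_of_matrix_Inl[abs_def] contr_linear
    by (simp add: sum_distrib_left mult_ac)
  also have "\<dots> = (\<Sum>j'\<in>UNIV. \<Sum>k'\<in>UNIV. \<Sum>k\<in>UNIV. \<Sum>j\<in>UNIV.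
      cnj (M $ j' $ j * \<beta> {Inl j, Inr k} * M $ k $ k') * contr (Inr k') (contr (Inl j') y) A)"
    by (rule sum_reverse_4)
  also have "\<dots> = contract ((M ** coef_mat \<beta>) ** M) y A"
    unfolding contract_def
    by (simp add: coef_mat_def matrix_matrix_mult_def sum_distrib_left sum_distrib_right cnj_sum mult_ac)
  finally show "wedge_adj (gram_of_matrix M) \<beta> y A = contract ((M ** coef_mat \<beta>) ** M) y A" .
qed

lemma form_adj_wedge_eq_contract:
  assumes "hermitian_metric \<omega>" and "bideg 1 1 \<beta>"
  shows "form_adj \<omega> (wedge \<beta>) =
    contract ((matrix_inv (coef_mat \<omega>) ** coef_mat \<beta>) ** matrix_inv (coef_mat \<omega>))"
  using form_adj_wedge[OF assms] by (simp add: fun_eq_iff dual_gram_eq wedge_adj_gram_of_matrix)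

lemma Lambda_op_eq_contract:
  assumes "hermitian_metric \<rho>"
  shows "Lambda_op \<rho> = contract (matrix_inv (coef_mat \<rho>))"
proof -
  have "bideg 1 1 \<rho>"
    using assms by (simp add: hermitian_metric_def real_11_form_def)
  moreover have "(matrix_inv (coef_mat \<rho>) ** coef_mat \<rho>) ** matrix_inv (coef_mat \<rho>) = matrix_inv (coef_mat \<rho>)"
    using matrix_inv_inverse[OF hermitian_metric_invertible[OF assms]] by simp
  ultimately show ?thesis
    unfolding Lambda_op_def using form_adj_wedge_eq_contract[OF assms] by simp
qed

section \<open>Derivatives\<close>

lemma has_vector_derivative_factor:
  fixes f Q :: "real \<Rightarrow> 'a::real_normed_vector"
  assumes "eventually (\<lambda>t. f t - f x = (t - x) *\<^sub>R Q t) (at x)" and "(Q \<longlongrightarrow> L) (at x)"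
  shows "(f has_vector_derivative L) (at x)"
  unfolding has_vector_derivative_def has_derivative_iff_norm
proof
  show "bounded_linear (\<lambda>t. t *\<^sub>R L)"
    by (rule bounded_linear_scaleR_left)
  have "eventually (\<lambda>t. norm (f t - f x - (t - x) *\<^sub>R L) / norm (t - x) = norm (Q t - L)) (at x)"
    using assms(1) eventually_neq_at_within[of x x UNIV]
  proof eventually_elim
    case (elim t)
    then have "f t - f x - (t - x) *\<^sub>R L = (t - x) *\<^sub>R (Q t - L)"
      by (simp add: scaleR_diff_right)
    then show ?case
      using elim by simp
  qed
  moreover have "((\<lambda>t. norm (Q t - L)) \<longlongrightarrow> 0) (at x)"
    using assms(2) by (simp add: tendsto_norm_zero_iff LIM_zero_iff)
  ultimately show "((\<lambda>t. norm (f t - f x - (t - x) *\<^sub>R L) / norm (t - x)) \<longlongrightarrow> 0) (at x)"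
    by (simp add: tendsto_cong)
qed

lemma tendsto_det:
  fixes A :: "'b \<Rightarrow> 'a::real_normed_field ^ 'n ^ 'n"
  assumes "\<And>i j. ((\<lambda>x. A x $ i $ j) \<longlongrightarrow> B $ i $ j) F"
  shows "((\<lambda>x. det (A x)) \<longlongrightarrow> det B) F"
  unfolding det_def by (intro tendsto_intros assms)

lemma matrix_inv_cramer:
  fixes A :: "'a::field ^ 'n ^ 'n"
  assumes "det A \<noteq> 0"
  shows "matrix_inv A $ p $ q = det (\<chi> i j. if j = p then axis q 1 $ i else A $ i $ j) / det A"
proof -
  have "invertible A"
    using assms by (simp add: invertible_det_nz)
  then have "A *v (matrix_inv A *v axis q 1) = axis q 1"
    by (simp add: matrix_vector_mul_assoc matrix_inv_inverse)
  then have "(matrix_inv A *v axis q 1) $ p = det (\<chi> i j. if j = p then axis q 1 $ i else A $ i $ j) / det A"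
    using cramer[OF assms] by simp
  moreover have "(matrix_inv A *v axis q 1) $ p = matrix_inv A $ p $ q"
    by (simp add: matrix_vector_mult_def axis_def if_distrib cong: if_cong)
  ultimately show ?thesis by simp
qed

lemma tendsto_matrix_inv:
  fixes A :: "'b \<Rightarrow> 'a::real_normed_field ^ 'n ^ 'n"
  assumes lim: "\<And>i j. ((\<lambda>x. A x $ i $ j) \<longlongrightarrow> B $ i $ j) F" and "invertible B"
  shows "((\<lambda>x. matrix_inv (A x) $ p $ q) \<longlongrightarrow> matrix_inv B $ p $ q) F"
proof -
  define R where "R C = (\<chi> i j. if j = p then axis q 1 $ i else C $ i $ j)" for C :: "'a ^ 'n ^ 'n"
  have dB: "det B \<noteq> 0"
    using assms(2) by (simp add: invertible_det_nz)
  have "eventually (\<lambda>x. det (A x) \<noteq> 0) F"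
    using tendsto_imp_eventually_ne[OF tendsto_det[OF lim] dB] .
  then have "eventually (\<lambda>x. matrix_inv (A x) $ p $ q = det (R (A x)) / det (A x)) F"
    by eventually_elim (simp add: matrix_inv_cramer R_def)
  moreover have "((\<lambda>x. det (R (A x)) / det (A x)) \<longlongrightarrow> det (R B) / det B) F"
    using lim by (intro tendsto_divide tendsto_det dB) (simp add: R_def)
  ultimately show ?thesis
    using matrix_inv_cramer[OF dB] by (simp add: R_def tendsto_cong)
qed

lemma matrix_add_rdistrib: "(A + B) ** C = A ** C + B ** C"
  by (simp add: matrix_matrix_mult_def vec_eq_iff sum.distrib ring_distribs)

text \<open>From \<open>M\<^sub>t (h + t g) = 1\<close> and \<open>h M = 1\<close> one gets \<open>M = M\<^sub>t + t M\<^sub>t g M\<close>, so the difference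
  quotient of \<open>M\<^sub>t = (h + t g)\<inverse>\<close> is \<open>-M\<^sub>t g M\<close>, which tends to \<open>-M g M\<close>.\<close>

lemma matrix_inv_has_vector_derivative:
  fixes h g :: "'a::real_normed_field ^ 'n ^ 'n"
  assumes "invertible h"
  shows "((\<lambda>t. matrix_inv (h + t *\<^sub>R g) $ a $ b) has_vector_derivative
           - (matrix_inv h ** g ** matrix_inv h) $ a $ b) (at 0)"
proof -
  define M where "M = matrix_inv h"
  define Mt where "Mt t = matrix_inv (h + t *\<^sub>R g)" for t
  have lim: "((\<lambda>t. (h + t *\<^sub>R g) $ i $ j) \<longlongrightarrow> h $ i $ j) (at 0)" for i j
    by (auto intro!: tendsto_eq_intros)
  have "eventually (\<lambda>t. invertible (h + t *\<^sub>R g)) (at 0)"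
    using tendsto_imp_eventually_ne[OF tendsto_det[OF lim]] assms by (simp add: invertible_det_nz)
  then have "eventually (\<lambda>t. Mt t $ a $ b - Mt 0 $ a $ b = (t - 0) *\<^sub>R (- (Mt t ** g ** M) $ a $ b)) (at 0)"
  proof eventually_elim
    case (elim t)
    have "M = (Mt t ** (h + t *\<^sub>R g)) ** M"
      using matrix_inv_inverse(2)[OF elim] by (simp add: Mt_def)
    also have "\<dots> = Mt t ** (h ** M) + t *\<^sub>R (Mt t ** g ** M)"
      by (simp add: matrix_mul_assoc[symmetric] matrix_add_ldistrib matrix_add_rdistrib
          scalar_matrix_assoc matrix_scalar_ac)
    also have "\<dots> = Mt t + t *\<^sub>R (Mt t ** g ** M)"
      using matrix_inv_inverse(1)[OF assms] by (simp add: M_def)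
    finally have "M $ a $ b = Mt t $ a $ b + t *\<^sub>R (Mt t ** g ** M) $ a $ b"
      by (metis vector_add_component vector_scaleR_component)
    then show ?case
      by (simp add: Mt_def M_def[symmetric] algebra_simps)
  qed
  moreover have "((\<lambda>t. - (Mt t ** g ** M) $ a $ b) \<longlongrightarrow> - (M ** g ** M) $ a $ b) (at 0)"
    unfolding matrix_matrix_mult_def Mt_def M_def
    by (simp only: vec_lambda_beta) (intro tendsto_intros tendsto_matrix_inv[OF lim assms])
  ultimately show ?thesis
    unfolding Mt_def M_def by (rule has_vector_derivative_factor)
qed

lemma contr_has_vector_derivative:
  assumes "\<And>B. ((\<lambda>t. y t B) has_vector_derivative y' B) F"
  shows "((\<lambda>t. contr b (y t) A) has_vector_derivative contr b y' A) F"
  unfolding contr_def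
  by (cases "b \<in> A") (simp_all add: has_vector_derivative_mult_right assms)

lemma contract_has_vector_derivative:
  assumes "\<And>j k. ((\<lambda>t. M t $ j $ k) has_vector_derivative M' $ j $ k) (at x)"
    and "\<And>B. ((\<lambda>t. y t B) has_vector_derivative y' B) (at x)"
  shows "((\<lambda>t. contract (M t) (y t) A) has_vector_derivative
           contract (M x) y' A + contract M' (y x) A) (at x)"
proof -
  have "((\<lambda>t. contract (M t) (y t) A) has_vector_derivative
      (\<Sum>j\<in>UNIV. \<Sum>k\<in>UNIV. cnj (\<i> * M x $ j $ k) * contr (Inr k) (contr (Inl j) y') A
        + cnj (\<i> * M' $ j $ k) * contr (Inr k) (contr (Inl j) (y x)) A)) (at x)"
    unfolding contract_def
    by (intro has_vector_derivative_sum has_vector_derivative_mult has_vector_derivative_cnj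
        has_vector_derivative_mult_right contr_has_vector_derivative assms)
  then show ?thesis
    by (simp only: contract_def sum.distrib)
qed

lemma smooth_on_has_vector_derivative:
  assumes "smooth_on I f" and "t \<in> I"
  shows "(f has_vector_derivative vector_derivative f (at t)) (at t)"
proof -
  obtain D where "D 0 = f" and "\<forall>k. \<forall>t\<in>I. (D k has_vector_derivative D (Suc k) t) (at t)"
    using assms(1) unfolding smooth_on_def by blast
  then have "(f has_vector_derivative D 1 t) (at t)"
    using assms(2) by force
  then show ?thesis
    by (simp add: vector_derivative_at)
qed

lemma coef_mat_form_add_smult:
  "coef_mat (form_add_smult \<omega> t \<gamma>) = coef_mat \<omega> + t *\<^sub>R coef_mat \<gamma>"
  by (simp add: vec_eq_iff coef_mat_def form_add_smult_def)
    (simp add: scaleR_conv_of_real algebra_simps)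

theorem lemma3p5:
  fixes \<omega> \<gamma> :: "('n::{finite,linorder}) form"
    and \<alpha> :: "real \<Rightarrow> 'n form"
    and p q :: nat and \<epsilon> :: real
  assumes "hermitian_metric \<omega>"
    and "real_11_form \<gamma>"
    and "\<epsilon> > 0"
    and "\<forall>t\<in>{-\<epsilon><..<\<epsilon>}. hermitian_metric (form_add_smult \<omega> t \<gamma>)"
    and "\<forall>t\<in>{-\<epsilon><..<\<epsilon>}. bideg p q (\<alpha> t)"
    and "\<forall>A. smooth_on {-\<epsilon><..<\<epsilon>} (\<lambda>t. \<alpha> t A)"
  shows "\<forall>A. ((\<lambda>t. Lambda_op (form_add_smult \<omega> t \<gamma>) (\<alpha> t) A) has_vector_derivative
            (Lambda_op \<omega> (\<lambda>B. vector_derivative (\<lambda>t. \<alpha> t B) (at 0)) A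
             - form_adj \<omega> (wedge \<gamma>) (\<alpha> 0) A)) (at 0)"
proof
  fix A :: "('n + 'n) set"
  define h g where "h = coef_mat \<omega>" and "g = coef_mat \<gamma>"
  define \<alpha>' where "\<alpha>' B = vector_derivative (\<lambda>t. \<alpha> t B) (at 0)" for B
  have d\<alpha>: "((\<lambda>t. \<alpha> t B) has_vector_derivative \<alpha>' B) (at 0)" for B
    unfolding \<alpha>'_def using assms(3,6) by (intro smooth_on_has_vector_derivative) auto
  have dM: "((\<lambda>t. matrix_inv (h + t *\<^sub>R g) $ j $ k) has_vector_derivative
      (- (matrix_inv h ** g ** matrix_inv h)) $ j $ k) (at 0)" for j k
    using matrix_inv_has_vector_derivative hermitian_metric_invertible[OF assms(1)] by (simp add: h_def)
  have "((\<lambda>t. contract (matrix_inv (h + t *\<^sub>R g)) (\<alpha> t) A) has_vector_derivative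
      contract (matrix_inv h) \<alpha>' A + contract (- (matrix_inv h ** g ** matrix_inv h)) (\<alpha> 0) A) (at 0)"
    using contract_has_vector_derivative[OF dM d\<alpha>] by simp
  also have "contract (matrix_inv h) \<alpha>' A + contract (- (matrix_inv h ** g ** matrix_inv h)) (\<alpha> 0) A
      = Lambda_op \<omega> \<alpha>' A - form_adj \<omega> (wedge \<gamma>) (\<alpha> 0) A"
    using assms(1,2)
    by (simp add: Lambda_op_eq_contract form_adj_wedge_eq_contract contract_uminus h_def g_def
        real_11_form_def)
  finally show "((\<lambda>t. Lambda_op (form_add_smult \<omega> t \<gamma>) (\<alpha> t) A) has_vector_derivative
      (Lambda_op \<omega> \<alpha>' A - form_adj \<omega> (wedge \<gamma>) (\<alpha> 0) A)) (at 0)"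
    using assms(3,4)
    by (elim has_vector_derivative_transform_within_open[where S = "{-\<epsilon><..<\<epsilon>}"])
      (simp_all add: Lambda_op_eq_contract coef_mat_form_add_smult h_def g_def)
qed

end
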